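(* Let $\mathbf p=(p_1,\dots,p_n)$ be positive integers with $p_1\ge\cdots\ge p_n$, and let $0\le c'<c\le 1$. Then for every house size $h>0$ we have $S_c(h,\mathbf p)\le S_{c'}(h,\mathbf p)$ in lexicographic order. Likewise $S_c(\mathbf p)\le S_{c'}(\mathbf p)$ in lexicographic order.
   Context: Stationary divisor method with cut point $c\in[0,1]$: seats are allocated one at a time. Initially each party $i$ has $a_i=0$ seats; each next seat goes to a party $i$ maximizing $p_i/(a_i+c)$, whose $a_i$ then increases by $1$. Ties are broken in favor of the smallest index. For $c=0$ the convention is that $p_i/0>p_j/0$ whenever $p_i>p_j$, and $p_i/0>p_j/k$ for every $k>0$. $S_c(h,\mathbf p)=(s_1,\dots,s_h)$, where $s_j$ is the index of the party receiving the $j$-th seat, and $S_c(\mathbf p)$ is the corresponding infinite sequence. Lexicographic order on sequences: $s<t$ if for some $k\ge0$ we have $s_i=t_i$ for $i\le k$ and $s_{k+1}<t_{k+1}$. *)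

theory Defs
  imports Complex_Main
begin

text \<open>Parties are indexed 0,...,n-1 (n = length p); party i has vote count p!i.
  An allocation is a function a :: nat => nat (seats of each party).\<close>

definition beats :: "real \<Rightarrow> nat list \<Rightarrow> (nat \<Rightarrow> nat) \<Rightarrow> nat \<Rightarrow> nat \<Rightarrow> bool" where
  "beats c p a i j =
     (if c = 0 \<and> a i = 0 \<and> a j = 0 then p ! i > p ! j
      else if c = 0 \<and> a i = 0 then True
      else if c = 0 \<and> a j = 0 then False
      else real (p ! i) / (real (a i) + c) > real (p ! j) / (real (a j) + c))"

definition winner :: "real \<Rightarrow> nat list \<Rightarrow> (nat \<Rightarrow> nat) \<Rightarrow> nat" where
  "winner c p a = (LEAST i. i < length p \<and> (\<forall>j < length p. \<not> beats c p a j i))"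

primrec alloc :: "real \<Rightarrow> nat list \<Rightarrow> nat \<Rightarrow> (nat \<Rightarrow> nat)" where
  "alloc c p 0 = (\<lambda>_. 0)"
| "alloc c p (Suc m) = (let w = winner c p (alloc c p m) in (alloc c p m)(w := alloc c p m w + 1))"

text \<open>Infinite seat sequence S_c(p): seat_seq c p m is the party receiving the (m+1)-th seat.\<close>
definition seat_seq :: "real \<Rightarrow> nat list \<Rightarrow> nat \<Rightarrow> nat" where
  "seat_seq c p m = winner c p (alloc c p m)"

definition seats :: "real \<Rightarrow> nat \<Rightarrow> nat list \<Rightarrow> nat list" where
  "seats c h p = map (seat_seq c p) [0..<h]"

definition lex_le_list :: "nat list \<Rightarrow> nat list \<Rightarrow> bool" where
  "lex_le_list s t = (s = t \<or> (\<exists>k. k < length s \<and> k < length t \<and>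
                        (\<forall>i<k. s ! i = t ! i) \<and> s ! k < t ! k))"

definition lex_le_seq :: "(nat \<Rightarrow> nat) \<Rightarrow> (nat \<Rightarrow> nat) \<Rightarrow> bool" where
  "lex_le_seq s t = (s = t \<or> (\<exists>k. (\<forall>i<k. s i = t i) \<and> s k < t k))"

end

theory Submission
  imports Defs
begin

text \<open>Both sequences agree up to the first seat at which they differ, so at that seat both
  methods face the same allocation. For a fixed allocation the winner under the larger cut point
  c has an index no larger than the winner under c': otherwise the c'-winner w' precedes the
  c-winner w, so p_w \<le> p_w', and w beats w' under c. Clearing denominators, this reads
  p_w' (a_w + c) < p_w (a_w' + c), and lowering c to c' decreases the right side by
  (c - c') p_w \<le> (c - c') p_w', so w still beats w' under c', contradicting the choice of w'.\<close>

lemma beats_imp_cross_mult_less: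
  assumes "c > 0" and "beats c p a i j"
  shows "real (p ! j) * (real (a i) + c) < real (p ! i) * (real (a j) + c)"
proof -
  have "real (p ! j) / (real (a j) + c) < real (p ! i) / (real (a i) + c)"
    using assms unfolding beats_def by auto
  then show ?thesis
    using \<open>c > 0\<close> by (simp add: divide_simps add_pos_nonneg mult.commute)
qed

lemma cross_mult_less_imp_beats:
  assumes "c \<ge> 0"
    and cross: "real (p ! j) * (real (a i) + c) < real (p ! i) * (real (a j) + c)"
  shows "beats c p a i j"
proof (cases "c = 0")
  case True
  have "a j \<noteq> 0"
  proof
    assume "a j = 0"
    with cross True have "real (p ! j) * real (a i) < 0" by simp
    then show False by (simp add: mult_less_0_iff)
  qed
  moreover have "real (p ! j) / real (a j) < real (p ! i) / real (a i)" if "a i \<noteq> 0"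
    using cross True that \<open>a j \<noteq> 0\<close> by (simp add: divide_simps mult.commute)
  ultimately show ?thesis
    using cross True unfolding beats_def by auto
next
  case False
  with \<open>c \<ge> 0\<close> have "real (a i) + c > 0" "real (a j) + c > 0" by auto
  with cross have "real (p ! j) / (real (a j) + c) < real (p ! i) / (real (a i) + c)"
    by (simp add: divide_simps mult.commute)
  with False show ?thesis unfolding beats_def by auto
qed

lemma beats_cut_antimono:
  assumes "0 \<le> c'" "c' \<le> c" "c > 0"
    and votes: "p ! i \<le> p ! j"
    and "beats c p a i j"
  shows "beats c' p a i j"
proof -
  let ?x = "real (p ! i)" and ?y = "real (p ! j)"
  have "?y * (real (a i) + c) < ?x * (real (a j) + c)"
    using beats_imp_cross_mult_less \<open>c > 0\<close> \<open>beats c p a i j\<close> by blast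
  moreover have "?x * (c - c') \<le> ?y * (c - c')"
    using votes \<open>c' \<le> c\<close> by (intro mult_right_mono) auto
  ultimately have "?y * (real (a i) + c') < ?x * (real (a j) + c')"
    by (simp add: algebra_simps)
  then show ?thesis
    using cross_mult_less_imp_beats \<open>0 \<le> c'\<close> by blast
qed

text \<open>A real-valued priority whose order is exactly the relation beats: for c = 0 a party
  without seats is put above every finite quotient p_i / a_i \<le> sum p, in the order of its votes.\<close>

definition priority :: "real \<Rightarrow> nat list \<Rightarrow> (nat \<Rightarrow> nat) \<Rightarrow> nat \<Rightarrow> real" where
  "priority c p a i =
     (if c = 0 \<and> a i = 0 then sum_list (map real p) + real (p ! i)
      else real (p ! i) / (real (a i) + c))"

lemma quotient_le_sum_list:
  assumes "i < length p" "k \<noteq> 0"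
  shows "real (p ! i) / real k \<le> sum_list (map real p)"
proof -
  have "real (p ! i) / real k \<le> real (p ! i)"
    using assms(2) by (simp add: divide_le_eq mult_le_cancel_left1)
  also have "\<dots> \<le> sum_list (map real p)"
    using assms(1) by (intro member_le_sum_list) (auto simp: set_conv_nth intro!: exI[of _ i])
  finally show ?thesis .
qed

lemma beats_iff_priority_less:
  assumes "c \<ge> 0" and pos: "\<forall>x \<in> set p. x > 0" and "i < length p" "j < length p"
  shows "beats c p a j i \<longleftrightarrow> priority c p a i < priority c p a j"
proof -
  have "p ! i > 0" "p ! j > 0" using pos assms(3,4) by auto
  moreover have "a i \<noteq> 0 \<Longrightarrow> real (p ! i) / real (a i) \<le> sum_list (map real p)"
    and "a j \<noteq> 0 \<Longrightarrow> real (p ! j) / real (a j) \<le> sum_list (map real p)"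
    using quotient_le_sum_list assms(3,4) by blast+
  ultimately show ?thesis
    unfolding beats_def priority_def by auto
qed

lemma ex_unbeaten_party:
  assumes "p \<noteq> []" "c \<ge> 0" and pos: "\<forall>x \<in> set p. x > 0"
  shows "\<exists>i<length p. \<forall>j<length p. \<not> beats c p a j i"
proof -
  let ?P = "priority c p a ` {..<length p}"
  obtain i where i: "i < length p" "priority c p a i = Max ?P"
    using Max_in[of ?P] \<open>p \<noteq> []\<close> by fastforce
  have "priority c p a j \<le> priority c p a i" if "j < length p" for j
    using that i(2) by simp
  with i(1) show ?thesis
    using beats_iff_priority_less[OF \<open>c \<ge> 0\<close> pos] by (meson not_less)
qed

lemma winner_unbeaten:
  assumes "p \<noteq> []" "c \<ge> 0" and "\<forall>x \<in> set p. x > 0"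
  shows "winner c p a < length p \<and> (\<forall>j<length p. \<not> beats c p a j (winner c p a))"
  using LeastI_ex[OF ex_unbeaten_party[OF assms]] unfolding winner_def by blast

lemma winner_beats_less_index:
  assumes "p \<noteq> []" "c \<ge> 0" and pos: "\<forall>x \<in> set p. x > 0"
    and "i < winner c p a"
  shows "beats c p a (winner c p a) i"
proof -
  let ?w = "winner c p a"
  have w: "?w < length p" "\<forall>j<length p. \<not> beats c p a j ?w"
    using winner_unbeaten[OF assms(1-3)] by auto
  with \<open>i < ?w\<close> have i: "i < length p" by simp
  obtain j where j: "j < length p" "beats c p a j i"
    using not_less_Least[OF \<open>i < ?w\<close>[unfolded winner_def]] i by auto
  have "priority c p a i < priority c p a j" "priority c p a j \<le> priority c p a ?w"
    using j w beats_iff_priority_less[OF \<open>c \<ge> 0\<close> pos] i by (auto simp: not_less)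
  then show ?thesis
    using beats_iff_priority_less[OF \<open>c \<ge> 0\<close> pos i w(1)] by simp
qed

lemma winner_cut_antimono:
  assumes pos: "\<forall>x \<in> set p. x > 0"
    and noninc: "\<forall>i j. i < j \<and> j < length p \<longrightarrow> p ! j \<le> p ! i"
    and "0 \<le> c'" "c' < c"
  shows "winner c p a \<le> winner c' p a"
proof (cases "p = []")
  case True
  then show ?thesis unfolding winner_def by simp
next
  case False
  let ?w = "winner c p a" and ?w' = "winner c' p a"
  have w: "?w < length p" and w': "?w' < length p" "\<forall>j<length p. \<not> beats c' p a j ?w'"
    using winner_unbeaten[OF False] assms(3,4) pos by auto
  show ?thesis
  proof (rule ccontr)
    assume "\<not> ?w \<le> ?w'"
    then have "?w' < ?w" by simp
    then have "beats c p a ?w ?w'"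
      using winner_beats_less_index[OF False _ pos] assms(3,4) by simp
    moreover have "p ! ?w \<le> p ! ?w'"
      using noninc \<open>?w' < ?w\<close> w by blast
    ultimately have "beats c' p a ?w ?w'"
      using beats_cut_antimono assms(3,4) by (meson less_eq_real_def le_less_trans)
    with w w'(2) show False by blast
  qed
qed

lemma alloc_eq_if_seat_seq_eq:
  assumes "\<forall>i<k. seat_seq c p i = seat_seq c' p i"
  shows "alloc c p k = alloc c' p k"
  using assms
proof (induction k)
  case (Suc k)
  then have "alloc c p k = alloc c' p k" by simp
  moreover have "winner c p (alloc c p k) = winner c' p (alloc c' p k)"
    using Suc.prems unfolding seat_seq_def by simp
  ultimately show ?case by (simp add: Let_def)
qed simp

lemma lex_le_seq_if_first_difference_le:
  assumes "\<And>k. \<forall>i<k. s i = t i \<Longrightarrow> s k \<le> t k"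
  shows "lex_le_seq s t"
proof (cases "s = t")
  case False
  then have ex: "\<exists>k. s k \<noteq> t k" by auto
  define k where "k = (LEAST k. s k \<noteq> t k)"
  have "\<forall>i<k. s i = t i" using not_less_Least k_def by blast
  moreover have "s k \<noteq> t k" using LeastI_ex[OF ex] k_def by simp
  ultimately show ?thesis
    using assms unfolding lex_le_seq_def by (meson order.not_eq_order_implies_strict)
qed (simp add: lex_le_seq_def)

lemma lex_le_list_if_first_difference_le:
  assumes "\<And>k. \<forall>i<k. s i = t i \<Longrightarrow> s k \<le> t k"
  shows "lex_le_list (map s [0..<h]) (map t [0..<h])"
proof (cases "\<exists>k<h. s k \<noteq> t k")
  case True
  define k where "k = (LEAST k. k < h \<and> s k \<noteq> t k)"
  have k: "k < h" "s k \<noteq> t k" using LeastI_ex[OF True] k_def by simp_all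
  have "\<forall>i<k. s i = t i" using not_less_Least k_def k(1) by fastforce
  with k assms have "(\<forall>i<k. s i = t i) \<and> s k < t k"
    by (meson order.not_eq_order_implies_strict)
  with k(1) show ?thesis
    unfolding lex_le_list_def by (intro disjI2 exI[of _ k]) auto
qed (auto simp: lex_le_list_def)

theorem mainTheorem2:
  fixes p :: "nat list" and c c' :: real
  assumes pos: "\<forall>x \<in> set p. x > 0"
    and noninc: "\<forall>i j. i < j \<and> j < length p \<longrightarrow> p ! j \<le> p ! i"
    and cut: "0 \<le> c'" "c' < c" "c \<le> 1"
  shows "(\<forall>h>0. lex_le_list (seats c h p) (seats c' h p))
         \<and> lex_le_seq (seat_seq c p) (seat_seq c' p)"
proof -
  have "seat_seq c p k \<le> seat_seq c' p k"
    if "\<forall>i<k. seat_seq c p i = seat_seq c' p i" for k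
    using winner_cut_antimono[OF pos noninc cut(1,2)] alloc_eq_if_seat_seq_eq[OF that]
    unfolding seat_seq_def by metis
  then show ?thesis
    unfolding seats_def
    using lex_le_list_if_first_difference_le lex_le_seq_if_first_difference_le by blast
qed

end
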